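(* Let $p,q\in\mathbb{C}$, let $K\in\mathbb{C}^{N\times N}$ be a constant matrix and $c=(c_1,\dots,c_N)$ a constant row vector. Let $r(n,m)=(\rho_1(n,m),\dots,\rho_N(n,m))^T$ and $M(n,m)\in\mathbb{C}^{N\times N}$ be functions on $\mathbb{Z}^2$ such that, for all $(n,m)$, $$(pI-K)\tilde r=(pI+K)r,\qquad (qI-K)\hat r=(qI+K)r,\qquad MK+KM=r\,c,$$ and $I+M(n,m)$ is invertible for all $(n,m)$. Let $a,b\in\mathbb{C}$, and assume $sI\pm K$ is invertible for $s\in\{0,p,q,a,b\}$ and the eigenvalues $k_1,\dots,k_N$ of $K$ (with multiplicity) satisfy $k_i+k_j\ne0$ for all $i,j$. For $i,j\in\mathbb{Z}$ define $S^{(i,j)}=c\,K^j(I+M)^{-1}K^i r$. Then for all $i,j\in\mathbb{Z}$: $$p\tilde S^{(i,j)}-\tilde S^{(i,j+1)}=pS^{(i,j)}+S^{(i+1,j)}-\tilde S^{(i,0)}S^{(0,j)},$$ $$pS^{(i,j)}+S^{(i,j+1)}=p\tilde S^{(i,j)}-\tilde S^{(i+1,j)}+S^{(i,0)}\tilde S^{(0,j)},$$ $$q\hat S^{(i,j)}-\hat S^{(i,j+1)}=qS^{(i,j)}+S^{(i+1,j)}-\hat S^{(i,0)}S^{(0,j)},$$ $$qS^{(i,j)}+S^{(i,j+1)}=q\hat S^{(i,j)}-\hat S^{(i+1,j)}+S^{(i,0)}\hat S^{(0,j)}.$$ Moreover, define $S(a,b)=c\,(bI+K)^{-1}(I+M)^{-1}(aI+K)^{-1}r$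 and $V(a)=1-c\,(I+M)^{-1}(aI+K)^{-1}r$ (and similarly $V(b)$, $S(b,a)$). If $S^{(i,j)}=S^{(j,i)}$ for all $i,j$, then $S(a,b)=S(b,a)$, $V(a)=1-c\,(aI+K)^{-1}(I+M)^{-1}r$, and $$1-(p+b)\tilde S(a,b)+(p-a)S(a,b)=\tilde V(a)V(b),\qquad 1-(q+b)\hat S(a,b)+(q-a)S(a,b)=\hat V(a)V(b),$$ $$1-(p+a)\tilde S(a,b)+(p-b)S(a,b)=\tilde V(b)V(a),\qquad 1-(q+a)\hat S(a,b)+(q-b)S(a,b)=\hat V(b)V(a).$$
   Context: For a function $f$ on $\mathbb{Z}^2$, $\tilde f(n,m)=f(n+1,m)$ and $\hat f(n,m)=f(n,m+1)$. $I$ is the $N\times N$ identity matrix. The symmetry $S(a,b)=S(b,a)$ and the identities for $S(a,b),V$ are to be understood for all $a,b$ with $aI+K$, $bI+K$ invertible (the symmetry argument uses the formal expansion $S(a,b)=\sum_{i,j\ge0}(-1)^{i+j}a^{-i-1}b^{-j-1}S^{(i,j)}$). *)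

theory Defs
  imports "HOL-Analysis.Analysis"
begin

definition mpow_nat :: "complex^'n^'n \<Rightarrow> nat \<Rightarrow> complex^'n^'n" where
  "mpow_nat K k = (((**) K) ^^ k) (mat 1)"

definition mpow_int :: "complex^'n^'n \<Rightarrow> int \<Rightarrow> complex^'n^'n" where
  "mpow_int K j = (if 0 \<le> j then mpow_nat K (nat j) else mpow_nat (matrix_inv K) (nat (- j)))"

definition rowcol :: "complex^'n \<Rightarrow> complex^'n \<Rightarrow> complex" where
  "rowcol c v = (\<Sum>k\<in>UNIV. c $ k * v $ k)"

definition outer :: "complex^'n \<Rightarrow> complex^'n \<Rightarrow> complex^'n^'n" where
  "outer r c = (\<chi> i j. r $ i * c $ j)"

definition is_eigenvalue :: "complex^'n^'n \<Rightarrow> complex \<Rightarrow> bool" where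
  "is_eigenvalue K k \<longleftrightarrow> (\<exists>v. v \<noteq> 0 \<and> K *v v = k *s v)"

definition Sij :: "complex^'n \<Rightarrow> complex^'n^'n \<Rightarrow> (int \<Rightarrow> int \<Rightarrow> complex^'n^'n)
    \<Rightarrow> (int \<Rightarrow> int \<Rightarrow> complex^'n) \<Rightarrow> int \<Rightarrow> int \<Rightarrow> int \<Rightarrow> int \<Rightarrow> complex" where
  "Sij c K M r n m i j =
     rowcol c (mpow_int K j *v (matrix_inv (mat 1 + M n m) *v (mpow_int K i *v r n m)))"

definition Sab :: "complex^'n \<Rightarrow> complex^'n^'n \<Rightarrow> (int \<Rightarrow> int \<Rightarrow> complex^'n^'n)
    \<Rightarrow> (int \<Rightarrow> int \<Rightarrow> complex^'n) \<Rightarrow> int \<Rightarrow> int \<Rightarrow> complex \<Rightarrow> complex \<Rightarrow> complex" where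
  "Sab c K M r n m a b =
     rowcol c (matrix_inv (mat b + K) *v (matrix_inv (mat 1 + M n m) *v
        (matrix_inv (mat a + K) *v r n m)))"

definition Va :: "complex^'n \<Rightarrow> complex^'n^'n \<Rightarrow> (int \<Rightarrow> int \<Rightarrow> complex^'n^'n)
    \<Rightarrow> (int \<Rightarrow> int \<Rightarrow> complex^'n) \<Rightarrow> int \<Rightarrow> int \<Rightarrow> complex \<Rightarrow> complex" where
  "Va c K M r n m a =
     1 - rowcol c (matrix_inv (mat 1 + M n m) *v (matrix_inv (mat a + K) *v r n m))"

end

theory Submission
  imports Defs "HOL-Computational_Algebra.Fundamental_Theorem_Algebra"
begin

(* The key step is a uniqueness statement of Sylvester type: since no two eigenvalues of K sum
   to zero, D K + K D = 0 forces D = 0 (proved by pushing D through a factored annihilating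
   polynomial of K). Applied to (pI - K) M~ - M (pI - K) - r c, which anticommutes with K by the
   dispersion relation for r, it gives (pI - K) M~ - M (pI - K) = r c and dually
   M~ (pI + K) - (pI + K) M = r~ c. Conjugating with (I + M)^-1 and (I + M~)^-1 turns these into
   rank-one commutator relations for the resolvents; sandwiching them between c K^j and K^i r
   gives the four identities for S^(i,j). Since (aI + K)^-1 is a polynomial in K, the symmetry of
   S^(i,j) passes to S(a,b) and to V(a), and sandwiching the second relation between the
   resolvents (aI + K)^-1 and (bI + K)^-1 gives the bilinear identities. The q-direction is the
   same argument with q in place of p. *)

section \<open>Square matrices as a ring\<close>

text \<open>HOL-Analysis multiplies \<open>complex^'n^'n\<close> componentwise; the copy \<open>'n sqmat\<close> carries the
  matrix product instead, so that ring automation applies.\<close>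

typedef ('n::finite) sqmat = "UNIV :: (complex^'n^'n) set" by simp

instantiation sqmat :: (finite) ring_1
begin

definition "0 = Abs_sqmat 0"
definition "1 = Abs_sqmat (mat 1)"
definition "A + B = Abs_sqmat (Rep_sqmat A + Rep_sqmat B)"
definition "A - B = Abs_sqmat (Rep_sqmat A - Rep_sqmat B)"
definition "- A = Abs_sqmat (- Rep_sqmat A)"
definition "A * B = Abs_sqmat (Rep_sqmat A ** Rep_sqmat B)"

instance
proof
  fix A B C :: "'a sqmat"
  have rdistrib: "(X + Y) ** Z = X ** Z + Y ** Z" for X Y Z :: "complex^'a^'a"
    by (vector matrix_matrix_mult_def sum.distrib[symmetric] field_simps)
  show "A * B * C = A * (B * C)"
    by (simp add: times_sqmat_def Abs_sqmat_inverse matrix_mul_assoc)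
  show "(A + B) * C = A * C + B * C"
    by (simp add: times_sqmat_def plus_sqmat_def Abs_sqmat_inverse rdistrib)
  show "A * (B + C) = A * B + A * C"
    by (simp add: times_sqmat_def plus_sqmat_def Abs_sqmat_inverse matrix_add_ldistrib)
  show "1 * A = A" "A * 1 = A"
    by (simp_all add: times_sqmat_def one_sqmat_def Abs_sqmat_inverse Rep_sqmat_inverse)
  show "A + B + C = A + (B + C)"
    by (simp add: plus_sqmat_def Abs_sqmat_inverse add.assoc)
  show "A + B = B + A"
    by (simp add: plus_sqmat_def add.commute)
  show "0 + A = A"
    by (simp add: plus_sqmat_def zero_sqmat_def Abs_sqmat_inverse Rep_sqmat_inverse)
  show "- A + A = 0"
    by (simp add: plus_sqmat_def zero_sqmat_def uminus_sqmat_def Abs_sqmat_inverse)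
  show "A - B = A + - B"
    by (simp add: plus_sqmat_def minus_sqmat_def uminus_sqmat_def Abs_sqmat_inverse)
  have "(mat 1 :: complex^'a^'a) $ i $ i = 1" for i
    by (simp add: mat_def)
  then have "(mat 1 :: complex^'a^'a) \<noteq> 0"
    by (metis zero_index zero_neq_one)
  then show "(0 :: 'a sqmat) \<noteq> 1"
    by (simp add: zero_sqmat_def one_sqmat_def Abs_sqmat_inject)
qed

end

lemma Rep_sqmat_simps [simp]:
  "Rep_sqmat (Abs_sqmat X) = X"
  "Rep_sqmat (A + B) = Rep_sqmat A + Rep_sqmat B"
  "Rep_sqmat (A - B) = Rep_sqmat A - Rep_sqmat B"
  "Rep_sqmat (- A) = - Rep_sqmat A"
  "Rep_sqmat (A * B) = Rep_sqmat A ** Rep_sqmat B"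
  "Rep_sqmat 0 = 0"
  "Rep_sqmat 1 = mat 1"
  by (simp_all add: plus_sqmat_def minus_sqmat_def uminus_sqmat_def times_sqmat_def
      zero_sqmat_def one_sqmat_def Abs_sqmat_inverse)

lemma sqmat_eq_iff: "A = B \<longleftrightarrow> Rep_sqmat A = Rep_sqmat B"
  by (simp add: Rep_sqmat_inject)

lemma Abs_sqmat_mult: "Abs_sqmat (X ** Y) = Abs_sqmat X * Abs_sqmat Y"
  by (simp add: times_sqmat_def)

definition scal :: "complex \<Rightarrow> 'n::finite sqmat" where
  "scal a = Abs_sqmat (mat a)"

lemma Rep_scal [simp]: "Rep_sqmat (scal a) = mat a"
  by (simp add: scal_def)

lemma mat_mult_scalar:
  fixes A :: "complex^'n^'n"
  shows "mat a ** A = (\<chi> i j. a * A $ i $ j)" "A ** mat a = (\<chi> i j. a * A $ i $ j)"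
  by (simp_all add: vec_eq_iff matrix_matrix_mult_def mat_def if_distrib if_distribR sum.delta'
      mult.commute cong: if_cong)

lemma scal_commute: "scal a * A = A * scal a"
  by (simp add: sqmat_eq_iff mat_mult_scalar)

lemma scal_left_commute: "A * (scal a * B) = scal a * (A * B)"
  by (metis mult.assoc scal_commute)

lemma scal_0 [simp]: "scal 0 = 0" and scal_1 [simp]: "scal 1 = 1"
  by (simp_all add: sqmat_eq_iff)

lemma scal_add: "scal (a + b) = scal a + scal b"
  and scal_diff: "scal (a - b) = scal a - scal b"
  and scal_minus: "scal (- a) = - scal a"
  by (simp_all add: sqmat_eq_iff vec_eq_iff mat_def)

lemma scal_mult: "scal (a * b) = scal a * scal b"
  by (simp add: sqmat_eq_iff mat_mult_scalar) (simp add: vec_eq_iff mat_def)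

definition mv :: "'n::finite sqmat \<Rightarrow> complex^'n \<Rightarrow> complex^'n" where
  "mv A v = Rep_sqmat A *v v"

definition vm :: "complex^'n \<Rightarrow> 'n::finite sqmat \<Rightarrow> complex^'n" where
  "vm w A = w v* Rep_sqmat A"

lemma mv_simps [simp]:
  "mv (A * B) v = mv A (mv B v)"
  "mv (A + B) v = mv A v + mv B v"
  "mv (A - B) v = mv A v - mv B v"
  "mv (- A) v = - mv A v"
  "mv 1 v = v"
  "mv 0 v = 0"
  "mv (scal a) v = a *s v"
  "mv A (u + w) = mv A u + mv A w"
  "mv A (u - w) = mv A u - mv A w"
  "mv A (a *s u) = a *s mv A u"
  "mv A (- u) = - mv A u"
  "mv A 0 = 0"
  by (simp_all add: mv_def matrix_vector_mul_assoc matrix_vector_mult_add_rdistrib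
      matrix_vector_mult_diff_rdistrib matrix_vector_right_distrib matrix_vector_mult_diff_distrib)
     (auto simp: vec_eq_iff matrix_vector_mult_def mat_def if_distrib if_distribR sum.delta'
        sum_distrib_left sum_negf algebra_simps cong: if_cong)

lemma mv_sum: "mv (sum F S) v = (\<Sum>i\<in>S. mv (F i) v)"
  and mv_sum_right: "mv A (sum f S) = (\<Sum>i\<in>S. mv A (f i))"
  by (induction S rule: infinite_finite_induct) auto

lemma vm_uminus [simp]: "vm (- w) A = - vm w A"
  by (simp add: vm_def vec_eq_iff vector_matrix_mult_def sum_negf)

lemma rowcol_simps [simp]:
  "rowcol w (u + v) = rowcol w u + rowcol w v"
  "rowcol w (u - v) = rowcol w u - rowcol w v"
  "rowcol w (a *s u) = a * rowcol w u"
  "rowcol w 0 = 0"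
  "rowcol w (- u) = - rowcol w u"
  "rowcol (- w) u = - rowcol w u"
  by (simp_all add: rowcol_def sum.distrib sum_subtractf sum_distrib_left sum_negf algebra_simps)

lemma rowcol_sum: "rowcol w (sum f S) = (\<Sum>i\<in>S. rowcol w (f i))"
  by (induction S rule: infinite_finite_induct) auto

lemma rowcol_vm [simp]: "rowcol (vm w A) z = rowcol w (mv A z)"
proof -
  have "rowcol w (mv A z) = (\<Sum>k\<in>UNIV. \<Sum>j\<in>UNIV. w $ k * Rep_sqmat A $ k $ j * z $ j)"
    by (simp add: rowcol_def mv_def matrix_vector_mult_def sum_distrib_left mult.assoc)
  also have "\<dots> = (\<Sum>j\<in>UNIV. \<Sum>k\<in>UNIV. w $ k * Rep_sqmat A $ k $ j * z $ j)"
    by (rule sum.swap)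
  also have "\<dots> = rowcol (vm w A) z"
    by (simp add: rowcol_def vm_def vector_matrix_mult_def sum_distrib_right mult.assoc)
  finally show ?thesis
    by (rule sym)
qed

definition dyad :: "complex^'n \<Rightarrow> complex^'n \<Rightarrow> 'n::finite sqmat" where
  "dyad u w = Abs_sqmat (outer u w)"

lemma mv_dyad: "mv (dyad u w) z = rowcol w z *s u"
  by (simp add: mv_def dyad_def outer_def rowcol_def vec_eq_iff matrix_vector_mult_def
      sum_distrib_left mult.assoc mult.commute mult.left_commute)

lemma mult_dyad: "A * dyad u w = dyad (mv A u) w"
  by (simp add: sqmat_eq_iff dyad_def outer_def mv_def vec_eq_iff matrix_matrix_mult_def
      matrix_vector_mult_def sum_distrib_right mult.assoc)

lemma dyad_mult: "dyad u w * A = dyad u (vm w A)"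
  by (simp add: sqmat_eq_iff dyad_def outer_def vm_def vec_eq_iff matrix_matrix_mult_def
      vector_matrix_mult_def sum_distrib_left mult.assoc mult.commute mult.left_commute)

lemma dyad_uminus_right: "dyad u (- w) = - dyad u w"
  by (simp add: sqmat_eq_iff dyad_def outer_def vec_eq_iff)

definition sqmat_inv :: "'n::finite sqmat \<Rightarrow> 'n sqmat" where
  "sqmat_inv A = Abs_sqmat (matrix_inv (Rep_sqmat A))"

lemma sqmat_inv:
  assumes "invertible (Rep_sqmat A)"
  shows sqmat_inv_left: "sqmat_inv A * A = 1" and sqmat_inv_right: "A * sqmat_inv A = 1"
proof -
  have "Rep_sqmat A ** matrix_inv (Rep_sqmat A) = mat 1 \<and> matrix_inv (Rep_sqmat A) ** Rep_sqmat A = mat 1"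
    using assms unfolding invertible_def matrix_inv_def by (rule someI_ex)
  then show "sqmat_inv A * A = 1" "A * sqmat_inv A = 1"
    by (simp_all add: sqmat_eq_iff sqmat_inv_def)
qed

lemma sqmat_inv_unique:
  assumes "invertible (Rep_sqmat A)" "A * B = 1"
  shows "sqmat_inv A = B"
proof -
  have "sqmat_inv A = sqmat_inv A * (A * B)"
    using assms(2) by simp
  also have "\<dots> = B"
    using sqmat_inv_left[OF assms(1)] by (simp add: mult.assoc[symmetric])
  finally show ?thesis .
qed

lemma sqmat_inv_commute:
  assumes "invertible (Rep_sqmat A)" "A * X = X * A"
  shows "sqmat_inv A * X = X * sqmat_inv A"
proof -
  have "sqmat_inv A * X = sqmat_inv A * X * (A * sqmat_inv A)"
    using sqmat_inv_right[OF assms(1)] by simp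
  also have "\<dots> = sqmat_inv A * (A * X) * sqmat_inv A"
    using assms(2) by (simp add: mult.assoc)
  also have "\<dots> = X * sqmat_inv A"
    using sqmat_inv_left[OF assms(1)] by (simp add: mult.assoc[symmetric])
  finally show ?thesis .
qed

section \<open>Polynomials in a matrix\<close>

definition poly_sqmat :: "complex poly \<Rightarrow> 'n::finite sqmat \<Rightarrow> 'n sqmat" where
  "poly_sqmat p K = (\<Sum>i\<le>degree p. scal (coeff p i) * K ^ i)"

lemma poly_sqmat_conv_sum:
  assumes "degree p < n"
  shows "poly_sqmat p K = (\<Sum>i<n. scal (coeff p i) * K ^ i)"
  unfolding poly_sqmat_def
proof (rule sum.mono_neutral_left)
  show "{..degree p} \<subseteq> {..<n}"
    using assms by auto
qed (auto simp: coeff_eq_0)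

lemma poly_sqmat_pCons: "poly_sqmat (pCons a p) K = scal a + K * poly_sqmat p K"
proof -
  have "degree (pCons a p) < Suc (Suc (degree p))"
    by (cases "p = 0") auto
  then have "poly_sqmat (pCons a p) K = (\<Sum>i<Suc (Suc (degree p)). scal (coeff (pCons a p) i) * K ^ i)"
    by (rule poly_sqmat_conv_sum)
  also have "\<dots> = scal a + (\<Sum>i<Suc (degree p). K * (scal (coeff p i) * K ^ i))"
    by (subst sum.lessThan_Suc_shift) (simp add: scal_left_commute mult.assoc)
  also have "\<dots> = scal a + K * poly_sqmat p K"
    by (simp add: poly_sqmat_conv_sum[of p "Suc (degree p)"] sum_distrib_left del: sum.lessThan_Suc)
  finally show ?thesis .
qed

lemma poly_sqmat_0 [simp]: "poly_sqmat 0 K = 0"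
  and poly_sqmat_const [simp]: "poly_sqmat [:a:] K = scal a"
  and poly_sqmat_1 [simp]: "poly_sqmat 1 K = 1"
  by (simp_all add: poly_sqmat_def)

lemma poly_sqmat_add: "poly_sqmat (p + q) K = poly_sqmat p K + poly_sqmat q K"
proof (induction p arbitrary: q)
  case (pCons a p)
  then show ?case
    by (cases q) (simp add: poly_sqmat_pCons scal_add algebra_simps)
qed simp

lemma poly_sqmat_smult: "poly_sqmat (smult a p) K = scal a * poly_sqmat p K"
  by (induction p) (simp_all add: poly_sqmat_pCons scal_mult scal_left_commute distrib_left mult.assoc)

lemma poly_sqmat_mult: "poly_sqmat (p * q) K = poly_sqmat p K * poly_sqmat q K"
  by (induction p) (simp_all add: poly_sqmat_pCons poly_sqmat_add poly_sqmat_smult distrib_right mult.assoc)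

lemma poly_sqmat_power: "poly_sqmat (p ^ k) K = poly_sqmat p K ^ k"
  by (induction k) (simp_all add: poly_sqmat_mult)

lemma poly_sqmat_linear [simp]: "poly_sqmat [:a, 1:] K = scal a + K"
  by (simp add: poly_sqmat_pCons)

lemma poly_sqmat_commute: "poly_sqmat p K * K = K * poly_sqmat p K"
  by (induction p) (simp_all add: poly_sqmat_pCons scal_commute algebra_simps mult.assoc)

lemma poly_sqmat_anticommute:
  assumes "D * K = - (K * D)"
  shows "D * poly_sqmat p K = poly_sqmat p (- K) * D"
proof (induction p)
  case (pCons a p)
  have "D * (K * poly_sqmat p K) = - K * (poly_sqmat p (- K) * D)"
    by (simp add: mult.assoc[symmetric] assms) (simp add: mult.assoc pCons.IH)
  then show ?case
    by (simp add: poly_sqmat_pCons algebra_simps scal_commute[of a D])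
qed simp

lemma Rep_sqmat_sum: "Rep_sqmat (sum F S) = (\<Sum>x\<in>S. Rep_sqmat (F x))"
  by (induction S rule: infinite_finite_induct) auto

lemma mat_of_real_mult: "mat (of_real t) ** X = t *\<^sub>R (X :: complex^'n^'n)"
  by (simp add: mat_mult_scalar vec_eq_iff) (simp add: scaleR_conv_of_real)

text \<open>The \<open>m + 1\<close> powers \<open>K\<^sup>0, \<dots>, K\<^sup>m\<close>, where \<open>m\<close> is the real dimension of the matrix
  space, are either not distinct or real-linearly dependent.\<close>

lemma exists_annihilating_poly: "\<exists>p. p \<noteq> 0 \<and> poly_sqmat p (K :: 'n::finite sqmat) = 0"
proof -
  define m where "m = DIM(complex^'n^'n)"
  define P where "P i = Rep_sqmat (K ^ i)" for i
  have "\<exists>cs. (\<exists>k\<le>m. cs k \<noteq> 0) \<and> (\<Sum>k\<le>m. scal (cs k) * K ^ k) = 0"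
  proof (cases "inj_on P {..m}")
    case True
    then have "card (P ` {..m}) = Suc m"
      by (simp add: card_image)
    then have "\<not> independent (P ` {..m})"
      using independent_bound[of "P ` {..m}"] by (auto simp: m_def)
    then obtain u where u: "\<exists>v\<in>P ` {..m}. u v \<noteq> 0" "(\<Sum>v\<in>P ` {..m}. u v *\<^sub>R v) = 0"
      using real_vector.dependent_finite[of "P ` {..m}"] by auto
    define cs where "cs k = complex_of_real (u (P k))" for k
    have "Rep_sqmat (\<Sum>k\<le>m. scal (cs k) * K ^ k) = (\<Sum>k\<le>m. u (P k) *\<^sub>R P k)"
      by (simp add: Rep_sqmat_sum cs_def P_def mat_of_real_mult)
    also have "\<dots> = 0"
      using u(2) sum.reindex_cong[OF True refl, of "\<lambda>v. u v *\<^sub>R v"] by simp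
    finally have "(\<Sum>k\<le>m. scal (cs k) * K ^ k) = 0"
      by (simp add: sqmat_eq_iff)
    moreover obtain k where "k \<le> m" "cs k \<noteq> 0"
      using u(1) by (auto simp: cs_def)
    ultimately show ?thesis
      by blast
  next
    case False
    then obtain i j where ij: "i \<le> m" "j \<le> m" "i \<noteq> j" "K ^ i = K ^ j"
      unfolding inj_on_def P_def sqmat_eq_iff by auto
    define cs where "cs k = (if k = j then 1 else if k = i then -1 else 0 :: complex)" for k
    have "scal (cs k) * K ^ k = (if k = j then K ^ k else 0) - (if k = i then K ^ k else 0)" for k
      using ij(3) by (auto simp: cs_def scal_minus)
    then have "(\<Sum>k\<le>m. scal (cs k) * K ^ k) = 0"
      using ij by (simp add: sum_subtractf)
    moreover have "cs j \<noteq> 0"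
      by (simp add: cs_def)
    ultimately show ?thesis
      using ij(2) by blast
  qed
  then obtain cs where cs: "\<exists>k\<le>m. cs k \<noteq> 0" "(\<Sum>k\<le>m. scal (cs k) * K ^ k) = 0"
    by blast
  define p where "p = (\<Sum>k\<le>m. monom (cs k) k)"
  have coeff_p: "coeff p k = (if k \<le> m then cs k else 0)" for k
    by (simp add: p_def coeff_sum coeff_monom)
  have "p \<noteq> 0"
    using cs(1) coeff_p by (metis coeff_0)
  moreover have "degree p < Suc m"
    using coeff_p by (metis degree_le le_imp_less_Suc not_less)
  then have "poly_sqmat p K = 0"
    using cs(2) by (simp add: poly_sqmat_conv_sum coeff_p lessThan_Suc_atMost del: sum.lessThan_Suc)
  ultimately show ?thesis
    by blast
qed

lemma invertible_power_mult_eq_0: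
  assumes "invertible (Rep_sqmat A)" "A ^ k * Y = 0"
  shows "Y = 0"
  using assms(2)
proof (induction k)
  case (Suc k)
  have "A ^ k * Y = sqmat_inv A * (A * A ^ k * Y)"
    using sqmat_inv_left[OF assms(1)] by (simp add: mult.assoc[symmetric])
  then show ?case
    using Suc by (simp add: power_Suc mult.assoc)
qed simp

text \<open>Split off the factor \<open>(X + a)\<^sup>k\<close> of an annihilating polynomial; the cofactor \<open>g\<close> still
  annihilates \<open>K\<close>, and dividing \<open>g\<close> by \<open>X + a\<close> with nonzero remainder \<open>g(-a)\<close> inverts \<open>a + K\<close>.\<close>

lemma sqmat_inv_is_poly_sqmat:
  assumes inv: "invertible (Rep_sqmat (scal a + K))"
  shows "\<exists>h. sqmat_inv (scal a + K) = poly_sqmat h K"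
proof -
  obtain p where "p \<noteq> 0" "poly_sqmat p K = 0"
    using exists_annihilating_poly by blast
  then obtain g where p: "p = [:a, 1:] ^ order (- a) p * g" and not_dvd: "\<not> [:a, 1:] dvd g"
    using order_decomp[of p "- a"] by auto
  have "(scal a + K) ^ order (- a) p * poly_sqmat g K = 0"
    using \<open>poly_sqmat p K = 0\<close> by (subst (asm) p) (simp add: poly_sqmat_mult poly_sqmat_power)
  then have g0: "poly_sqmat g K = 0"
    by (rule invertible_power_mult_eq_0[OF inv])
  define f where "f = poly g (- a)"
  define s where "s = synthetic_div g (- a)"
  have "f \<noteq> 0"
    using not_dvd poly_eq_0_iff_dvd[of g "- a"] by (simp add: f_def)
  have "[:a, 1:] * s + [:f:] = g"
    using synthetic_div_correct'[of "- a" g] by (simp add: s_def f_def)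
  then have "(scal a + K) * poly_sqmat s K = - scal f"
    using g0 by (metis poly_sqmat_add poly_sqmat_const poly_sqmat_linear poly_sqmat_mult
        add_eq_0_iff2)
  then have "(scal a + K) * (scal (- 1 / f) * poly_sqmat s K) = 1"
    using \<open>f \<noteq> 0\<close> by (simp add: scal_left_commute scal_mult[symmetric] scal_minus)
  then have "sqmat_inv (scal a + K) = scal (- 1 / f) * poly_sqmat s K"
    by (rule sqmat_inv_unique[OF inv])
  then show ?thesis
    by (metis poly_sqmat_smult)
qed

section \<open>Anticommuting matrices\<close>

lemma is_eigenvalue_uminus: "is_eigenvalue (- A) k \<longleftrightarrow> is_eigenvalue A (- k)"
proof -
  have "(- A) *v v = k *s v \<longleftrightarrow> A *v v = (- k) *s v" for v
    by (auto simp: vec_eq_iff matrix_vector_mult_def sum_negf minus_equation_iff)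
  then show ?thesis
    unfolding is_eigenvalue_def by simp
qed

lemma singular_imp_is_eigenvalue:
  fixes A :: "complex^'n^'n"
  assumes "\<not> invertible (A - mat x)"
  shows "is_eigenvalue A x"
proof -
  obtain y where "y \<noteq> 0" "(A - mat x) *v y = 0"
    using assms matrix_left_invertible_ker invertible_left_inverse by blast
  moreover have "mat x *v y = x *s y"
    by (simp add: vec_eq_iff matrix_vector_mult_def mat_def if_distrib if_distribR sum.delta'
        cong: if_cong)
  ultimately show ?thesis
    unfolding is_eigenvalue_def by (auto simp: matrix_vector_mult_diff_rdistrib)
qed

lemma zero_divisor_not_invertible:
  assumes "Y \<noteq> 0"
  shows "A * Y = 0 \<Longrightarrow> \<not> invertible (Rep_sqmat A)"
    and "Y * A = 0 \<Longrightarrow> \<not> invertible (Rep_sqmat A)"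
proof -
  show "\<not> invertible (Rep_sqmat A)" if "A * Y = 0"
  proof
    assume "invertible (Rep_sqmat A)"
    then have "Y = sqmat_inv A * (A * Y)"
      by (simp add: mult.assoc[symmetric] sqmat_inv_left)
    then show False
      using assms that by simp
  qed
  show "\<not> invertible (Rep_sqmat A)" if "Y * A = 0"
  proof
    assume "invertible (Rep_sqmat A)"
    then have "Y = Y * A * sqmat_inv A"
      by (simp add: mult.assoc sqmat_inv_right)
    then show False
      using assms that by simp
  qed
qed

text \<open>If \<open>Y \<noteq> 0\<close> anticommutes with \<open>K\<close> and \<open>K Y = -x Y\<close>, then also \<open>Y K = x Y\<close>, so both \<open>-x\<close>
  and \<open>x\<close> are eigenvalues of \<open>K\<close>; peeling off the factors of the annihilating polynomial one at
  a time therefore kills \<open>D\<close>.\<close>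

lemma anticommuting_root_product_eq_0:
  fixes K D :: "'n::finite sqmat"
  assumes eig: "\<And>k l. is_eigenvalue (Rep_sqmat K) k \<Longrightarrow> is_eigenvalue (Rep_sqmat K) l \<Longrightarrow> k + l \<noteq> 0"
    and "D * K = - (K * D)"
    and "poly_sqmat (\<Prod>x\<in>#A. [:- x, 1:]) (- K) * D = 0"
  shows "D = 0"
  using assms(2,3)
proof (induction A arbitrary: D)
  case (add x A)
  define Y where "Y = poly_sqmat (\<Prod>x\<in>#A. [:- x, 1:]) (- K) * D"
  have YK: "Y * K = - (K * Y)"
    using poly_sqmat_commute[of "\<Prod>x\<in>#A. [:- x, 1:]" "- K"] add.prems(1)
    by (simp add: Y_def mult.assoc) (simp add: mult.assoc[symmetric])
  have "poly_sqmat (\<Prod>x\<in>#add_mset x A. [:- x, 1:]) (- K)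
      = (scal (- x) - K) * poly_sqmat (\<Prod>x\<in>#A. [:- x, 1:]) (- K)"
    by (simp only: image_mset_add_mset prod_mset.add_mset poly_sqmat_mult poly_sqmat_linear) simp
  then have "(scal (- x) - K) * Y = 0"
    using add.prems(2) by (simp add: Y_def mult.assoc)
  then have right: "(K - scal (- x)) * Y = 0"
    by (metis minus_diff_eq minus_mult_left neg_equal_0_iff_equal)
  then have "K * Y = - (scal x * Y)"
    by (simp add: algebra_simps scal_minus eq_neg_iff_add_eq_0)
  then have left: "Y * (K - scal x) = 0"
    by (simp add: YK algebra_simps scal_commute[of x Y])
  have "Y = 0"
  proof (rule ccontr)
    assume "Y \<noteq> 0"
    then have "is_eigenvalue (Rep_sqmat K) (- x)" "is_eigenvalue (Rep_sqmat K) x"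
      using zero_divisor_not_invertible[OF _ right] zero_divisor_not_invertible[OF _ left]
      by (auto intro: singular_imp_is_eigenvalue)
    then show False
      using eig[of "- x" x] by simp
  qed
  then show "D = 0"
    using add.IH[OF add.prems(1)] by (simp add: Y_def)
qed simp

lemma anticommutator_eq_0_imp_eq_0:
  fixes K D :: "'n::finite sqmat"
  assumes eig: "\<And>k l. is_eigenvalue (Rep_sqmat K) k \<Longrightarrow> is_eigenvalue (Rep_sqmat K) l \<Longrightarrow> k + l \<noteq> 0"
    and "D * K + K * D = 0"
  shows "D = 0"
proof -
  have DK: "D * K = - (K * D)"
    using assms(2) by (simp add: eq_neg_iff_add_eq_0)
  obtain p where "p \<noteq> 0" "poly_sqmat p K = 0"
    using exists_annihilating_poly by blast
  define l where "l = lead_coeff p"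
  define Q where "Q = poly_sqmat (\<Prod>x\<in>#proots p. [:- x, 1:]) (- K)"
  have "poly_sqmat p (- K) = scal l * Q"
    using complex_poly_decompose_multiset[of p] poly_sqmat_smult by (metis Q_def l_def)
  then have "scal l * Q * D = poly_sqmat p (- K) * D"
    by simp
  also have "\<dots> = 0"
    using poly_sqmat_anticommute[OF DK, of p] \<open>poly_sqmat p K = 0\<close> by simp
  finally have "scal (1 / l) * (scal l * Q * D) = 0"
    by simp
  then have "Q * D = 0"
    using \<open>p \<noteq> 0\<close> by (simp add: l_def mult.assoc[symmetric] scal_mult[symmetric])
  then show ?thesis
    using anticommuting_root_product_eq_0[OF eig DK] Q_def by blast
qed

section \<open>Rank-one relations for the resolvents\<close>

lemma shift_commutator:
  fixes K M M' :: "'n::finite sqmat"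
  assumes eig: "\<And>k l. is_eigenvalue (Rep_sqmat K) k \<Longrightarrow> is_eigenvalue (Rep_sqmat K) l \<Longrightarrow> k + l \<noteq> 0"
    and shift: "mv (scal s - K) r' = mv (scal s + K) r"
    and MK: "M * K + K * M = dyad r c" and MK': "M' * K + K * M' = dyad r' c"
  shows "(scal s - K) * M' - M * (scal s - K) = dyad r c"
proof -
  define D where "D = (scal s - K) * M' - M * (scal s - K) - dyad r c"
  have "D * K + K * D
      = (scal s - K) * (M' * K + K * M') - (M * K + K * M) * (scal s - K) - (dyad r c * K + K * dyad r c)"
    by (simp add: D_def algebra_simps scal_commute[of s K] scal_left_commute[of K s])
  also have "\<dots> = (scal s + K) * dyad r c - dyad r c * (scal s - K) - (dyad r c * K + K * dyad r c)"
    by (simp only: MK MK' mult_dyad shift)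
  also have "\<dots> = 0"
    by (simp add: algebra_simps scal_commute[of s "dyad r c"])
  finally have "D = 0"
    using anticommutator_eq_0_imp_eq_0 eig by blast
  then show ?thesis
    by (simp add: D_def)
qed

lemma sqmat_inv_commutator:
  assumes "invertible (Rep_sqmat A)" "invertible (Rep_sqmat B)" "P * B - A * P = E"
  shows "sqmat_inv A * P - P * sqmat_inv B = sqmat_inv A * E * sqmat_inv B"
proof -
  have "sqmat_inv A * P - P * sqmat_inv B
      = sqmat_inv A * P * (B * sqmat_inv B) - (sqmat_inv A * A) * P * sqmat_inv B"
    using assms(1,2) by (simp add: sqmat_inv_left sqmat_inv_right)
  also have "\<dots> = sqmat_inv A * (P * B - A * P) * sqmat_inv B"
    by (simp add: algebra_simps)
  finally show ?thesis
    using assms(3) by simp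
qed

text \<open>The second relation is the first one for \<open>-K\<close> and \<open>-c\<close> with the two lattice points exchanged.\<close>

lemma resolvent_shift_relations:
  fixes K M M' :: "'n::finite sqmat"
  assumes eig: "\<And>k l. is_eigenvalue (Rep_sqmat K) k \<Longrightarrow> is_eigenvalue (Rep_sqmat K) l \<Longrightarrow> k + l \<noteq> 0"
    and shift: "mv (scal s - K) r' = mv (scal s + K) r"
    and MK: "M * K + K * M = dyad r c" and MK': "M' * K + K * M' = dyad r' c"
    and inv: "invertible (Rep_sqmat (1 + M))" and inv': "invertible (Rep_sqmat (1 + M'))"
  shows "sqmat_inv (1 + M) * (scal s - K) - (scal s - K) * sqmat_inv (1 + M')
      = dyad (mv (sqmat_inv (1 + M)) r) (vm c (sqmat_inv (1 + M')))"
    and "(scal s + K) * sqmat_inv (1 + M) - sqmat_inv (1 + M') * (scal s + K)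
      = dyad (mv (sqmat_inv (1 + M')) r') (vm c (sqmat_inv (1 + M)))"
proof -
  have "(scal s - K) * M' - M * (scal s - K) = dyad r c"
    by (rule shift_commutator[OF eig shift MK MK'])
  then have "(scal s - K) * (1 + M') - (1 + M) * (scal s - K) = dyad r c"
    by (simp add: algebra_simps)
  from sqmat_inv_commutator[OF inv inv' this]
  show "sqmat_inv (1 + M) * (scal s - K) - (scal s - K) * sqmat_inv (1 + M')
      = dyad (mv (sqmat_inv (1 + M)) r) (vm c (sqmat_inv (1 + M')))"
    by (simp add: mult_dyad dyad_mult)
  have eig_neg: "k + l \<noteq> 0" if "is_eigenvalue (Rep_sqmat (- K)) k" "is_eigenvalue (Rep_sqmat (- K)) l" for k l
    using that eig[of "- k" "- l"] by (simp add: is_eigenvalue_uminus add_eq_0_iff)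
  have "(scal s - - K) * M - M' * (scal s - - K) = dyad r' (- c)"
    by (rule shift_commutator[OF eig_neg])
      (use shift MK MK' in \<open>simp_all add: dyad_uminus_right algebra_simps\<close>)
  then have "(scal s + K) * (1 + M) - (1 + M') * (scal s + K) = - dyad r' c"
    by (simp add: algebra_simps dyad_uminus_right)
  from sqmat_inv_commutator[OF inv' inv this]
  show "(scal s + K) * sqmat_inv (1 + M) - sqmat_inv (1 + M') * (scal s + K)
      = dyad (mv (sqmat_inv (1 + M')) r') (vm c (sqmat_inv (1 + M)))"
    by (simp add: mult_dyad dyad_mult algebra_simps)
qed

section \<open>The bilinear forms \<open>S\<close>\<close>

text \<open>\<open>sform c X A B v\<close> is \<open>c B X A v\<close>; with \<open>X = (I + M)\<^sup>-\<^sup>1\<close> and \<open>v = r\<close> this is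
  \<open>S\<^sup>(\<^sup>i\<^sup>,\<^sup>j\<^sup>)\<close> for \<open>A = K\<^sup>i\<close>, \<open>B = K\<^sup>j\<close> and \<open>S(a,b)\<close> for the resolvents \<open>A = (aI + K)\<^sup>-\<^sup>1\<close>,
  \<open>B = (bI + K)\<^sup>-\<^sup>1\<close>.\<close>

definition sform :: "complex^'n \<Rightarrow> 'n::finite sqmat \<Rightarrow> 'n sqmat \<Rightarrow> 'n sqmat \<Rightarrow> complex^'n \<Rightarrow> complex" where
  "sform c X A B v = rowcol c (mv B (mv X (mv A v)))"

lemma sform_uminus:
  "sform (- c) X A B v = - sform c X A B v"
  "sform c X (- A) B v = - sform c X A B v"
  "sform c X A (- B) v = - sform c X A B v"
  by (simp_all add: sform_def)

lemma sform_shift_identity: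
  fixes K X X' A B :: "'n::finite sqmat"
  assumes rel: "X * (scal s - K) - (scal s - K) * X' = dyad (mv X r) (vm c X')"
    and shift: "mv (scal s - K) r' = mv (scal s + K) r"
    and AK: "A * K = K * A"
  shows "s * sform c X' A B r' - sform c X' A (B * K) r'
    = s * sform c X A B r + sform c X (A * K) B r - sform c X' A 1 r' * sform c X 1 B r"
proof -
  have "(scal s - K) * A = A * (scal s - K)"
    by (simp add: algebra_simps AK scal_commute)
  then have "mv (scal s - K) (mv A r') = mv A (mv (scal s + K) r)"
    by (metis mv_simps(1) shift)
  then have Ar': "mv (scal s - K) (mv A r') = s *s mv A r + mv A (mv K r)"
    by simp
  have rel': "(scal s - K) * X' = X * (scal s - K) - dyad (mv X r) (vm c X')"
    using rel by (simp add: algebra_simps)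
  have "s * sform c X' A B r' - sform c X' A (B * K) r'
      = rowcol c (mv B (mv ((scal s - K) * X') (mv A r')))"
    by (simp add: sform_def)
  also have "\<dots> = rowcol c (mv B (mv X (s *s mv A r + mv A (mv K r))
      - rowcol (vm c X') (mv A r') *s mv X r))"
    by (simp only: rel' mv_simps(1) mv_simps(3)[of "X * (scal s - K)"] mv_dyad Ar')
  also have "\<dots> = s * sform c X A B r + sform c X (A * K) B r - sform c X' A 1 r' * sform c X 1 B r"
    by (simp add: sform_def algebra_simps)
  finally show ?thesis .
qed

lemma sform_shift_identities:
  fixes K X X' A B :: "'n::finite sqmat"
  assumes rel_minus: "X * (scal s - K) - (scal s - K) * X' = dyad (mv X r) (vm c X')"
    and rel_plus: "(scal s + K) * X - X' * (scal s + K) = dyad (mv X' r') (vm c X)"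
    and shift: "mv (scal s - K) r' = mv (scal s + K) r"
    and AK: "A * K = K * A"
  shows "s * sform c X' A B r' - sform c X' A (B * K) r'
      = s * sform c X A B r + sform c X (A * K) B r - sform c X' A 1 r' * sform c X 1 B r"
    and "s * sform c X A B r + sform c X A (B * K) r
      = s * sform c X' A B r' - sform c X' (A * K) B r' + sform c X A 1 r * sform c X' 1 B r'"
proof -
  show "s * sform c X' A B r' - sform c X' A (B * K) r'
      = s * sform c X A B r + sform c X (A * K) B r - sform c X' A 1 r' * sform c X 1 B r"
    by (rule sform_shift_identity[OF rel_minus shift AK])
  have "s * sform (- c) X A B r - sform (- c) X A (B * - K) r
      = s * sform (- c) X' A B r' + sform (- c) X' (A * - K) B r'
        - sform (- c) X A 1 r * sform (- c) X' 1 B r'"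
    by (rule sform_shift_identity)
      (use rel_plus shift AK in \<open>simp_all add: algebra_simps dyad_uminus_right\<close>)
  then show "s * sform c X A B r + sform c X A (B * K) r
      = s * sform c X' A B r' - sform c X' (A * K) B r' + sform c X A 1 r * sform c X' 1 B r'"
    by (simp add: sform_uminus algebra_simps)
qed

lemma resolvent_commute:
  fixes K :: "'n::finite sqmat"
  shows "(scal a + K) * (scal b + K) = (scal b + K) * (scal a + K)"
proof -
  have "scal a * scal b = scal b * (scal a :: 'n sqmat)"
    by (simp add: scal_mult[symmetric] mult.commute)
  then show ?thesis
    by (simp add: distrib_left distrib_right scal_commute[of _ K] add_ac)
qed

lemma sform_resolvent_identity:
  fixes K X X' :: "'n::finite sqmat"
  assumes rel_plus: "(scal s + K) * X - X' * (scal s + K) = dyad (mv X' r') (vm c X)"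
    and shift: "mv (scal s - K) r' = mv (scal s + K) r"
    and inv_a: "invertible (Rep_sqmat (scal a + K))" and inv_b: "invertible (Rep_sqmat (scal b + K))"
  defines "Ra \<equiv> sqmat_inv (scal a + K)" and "Rb \<equiv> sqmat_inv (scal b + K)"
  assumes sym: "sform c X Ra Rb r = sform c X Rb Ra r"
    and sym': "sform c X' Ra Rb r' = sform c X' Rb Ra r'"
    and sym1': "sform c X' Ra 1 r' = sform c X' 1 Ra r'"
  shows "1 - (s + b) * sform c X' Ra Rb r' + (s - a) * sform c X Ra Rb r
    = (1 - sform c X' Ra 1 r') * (1 - sform c X Rb 1 r)"
proof -
  have "Ra * (scal s + K) = Ra * scal (s - a) + Ra * (scal a + K)"
    by (simp add: scal_diff algebra_simps)
  also have "\<dots> = scal (s - a) * Ra + 1"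
    by (simp add: Ra_def sqmat_inv_left[OF inv_a] scal_commute)
  finally have Ra: "Ra * (scal s + K) = scal (s - a) * Ra + 1" .
  have "Rb * (scal s - K) = Rb * scal (s + b) - Rb * (scal b + K)"
    by (simp add: scal_add algebra_simps)
  also have "\<dots> = scal (s + b) * Rb - 1"
    by (simp add: Rb_def sqmat_inv_left[OF inv_b] scal_commute)
  finally have Rb: "Rb * (scal s - K) = scal (s + b) * Rb - 1" .
  have "(scal s + K) * Rb = Rb * (scal s + K)"
    using sqmat_inv_commute[OF inv_b resolvent_commute] by (simp add: Rb_def)
  then have "mv (scal s + K) (mv Rb r) = mv (Rb * (scal s - K)) r'"
    by (metis mv_simps(1) shift)
  then have Rb_r: "mv (scal s + K) (mv Rb r) = (s + b) *s mv Rb r' - r'"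
    by (simp add: Rb)
  have "sform c X' 1 Ra r' * sform c X Rb 1 r
      = rowcol c (mv Ra (mv ((scal s + K) * X - X' * (scal s + K)) (mv Rb r)))"
    unfolding rel_plus by (simp add: sform_def mv_dyad)
  also have "\<dots> = rowcol c (mv (Ra * (scal s + K)) (mv X (mv Rb r)))
      - rowcol c (mv Ra (mv X' (mv (scal s + K) (mv Rb r))))"
    by simp
  also have "\<dots> = (s - a) * sform c X Rb Ra r + sform c X Rb 1 r
      - ((s + b) * sform c X' Rb Ra r' - sform c X' 1 Ra r')"
    by (simp only: Ra Rb_r) (simp add: sform_def algebra_simps)
  finally show ?thesis
    using sym sym' sym1' by (simp add: algebra_simps)
qed

lemma sform_poly_sqmat_expand:
  assumes "degree f < n" "degree g < n"
  shows "sform c X (poly_sqmat f K) (poly_sqmat g K) v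
    = (\<Sum>i<n. \<Sum>j<n. coeff f i * coeff g j * sform c X (K ^ i) (K ^ j) v)"
  by (simp add: sform_def poly_sqmat_conv_sum[OF assms(1)] poly_sqmat_conv_sum[OF assms(2)]
      mv_sum mv_sum_right rowcol_sum sum_distrib_left mult.assoc del: sum.lessThan_Suc)

lemma sform_poly_sqmat_sym:
  assumes "\<And>i j. sform c X (K ^ i) (K ^ j) v = sform c X (K ^ j) (K ^ i) v"
  shows "sform c X (poly_sqmat f K) (poly_sqmat g K) v = sform c X (poly_sqmat g K) (poly_sqmat f K) v"
proof -
  define n where "n = Suc (max (degree f) (degree g))"
  have deg: "degree f < n" "degree g < n"
    by (auto simp: n_def)
  have "sform c X (poly_sqmat f K) (poly_sqmat g K) v
      = (\<Sum>i<n. \<Sum>j<n. coeff f i * coeff g j * sform c X (K ^ i) (K ^ j) v)"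
    by (rule sform_poly_sqmat_expand[OF deg])
  also have "\<dots> = (\<Sum>j<n. \<Sum>i<n. coeff g j * coeff f i * sform c X (K ^ j) (K ^ i) v)"
    by (subst sum.swap) (simp add: assms mult.commute)
  also have "\<dots> = sform c X (poly_sqmat g K) (poly_sqmat f K) v"
    by (rule sform_poly_sqmat_expand[OF deg(2,1), symmetric])
  finally show ?thesis .
qed

section \<open>Back to the lattice functions\<close>

definition ipow :: "'n::finite sqmat \<Rightarrow> int \<Rightarrow> 'n sqmat" where
  "ipow K i = (if 0 \<le> i then K ^ nat i else sqmat_inv K ^ nat (- i))"

lemma ipow_of_nat [simp]: "ipow K (int k) = K ^ k"
  and ipow_0 [simp]: "ipow K 0 = 1"
  by (simp_all add: ipow_def)

lemma ipow_commute:
  assumes "invertible (Rep_sqmat K)"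
  shows "ipow K i * K = K * ipow K i"
  using sqmat_inv_left[OF assms] sqmat_inv_right[OF assms]
  by (simp add: ipow_def power_commutes power_commuting_commutes)

lemma ipow_add_1:
  assumes "invertible (Rep_sqmat K)"
  shows "ipow K (i + 1) = ipow K i * K"
proof (cases "0 \<le> i")
  case True
  then have "nat (i + 1) = Suc (nat i)"
    by simp
  with True show ?thesis
    by (simp add: ipow_def power_Suc2 power_commutes)
next
  case False
  define k where "k = nat (- (i + 1))"
  have "ipow K (i + 1) = sqmat_inv K ^ k"
    using False by (cases "k = 0") (auto simp: ipow_def k_def)
  moreover have "nat (- i) = Suc k"
    using False by (simp add: k_def)
  then have "ipow K i = sqmat_inv K ^ k * sqmat_inv K"
    using False by (simp add: ipow_def power_Suc2 power_commutes)
  ultimately show ?thesis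
    by (simp add: mult.assoc sqmat_inv_left[OF assms])
qed

lemma Abs_sqmat_mpow_nat: "Abs_sqmat (mpow_nat K k) = Abs_sqmat K ^ k"
  by (induction k) (simp_all add: mpow_nat_def Abs_sqmat_mult one_sqmat_def)

lemma Abs_sqmat_mpow_int: "Abs_sqmat (mpow_int K i) = ipow (Abs_sqmat K) i"
  by (simp add: mpow_int_def ipow_def sqmat_inv_def Abs_sqmat_mpow_nat)

lemma Sij_eq_sform:
  "Sij c K M r n m i j
    = sform c (sqmat_inv (1 + Abs_sqmat (M n m))) (ipow (Abs_sqmat K) i) (ipow (Abs_sqmat K) j) (r n m)"
  by (simp add: Sij_def sform_def mv_def sqmat_inv_def flip: Abs_sqmat_mpow_int)

lemma Sab_eq_sform:
  "Sab c K M r n m a b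
    = sform c (sqmat_inv (1 + Abs_sqmat (M n m)))
        (sqmat_inv (scal a + Abs_sqmat K)) (sqmat_inv (scal b + Abs_sqmat K)) (r n m)"
  by (simp add: Sab_def sform_def mv_def sqmat_inv_def)

lemma Va_eq_sform:
  "Va c K M r n m a = 1 - sform c (sqmat_inv (1 + Abs_sqmat (M n m))) (sqmat_inv (scal a + Abs_sqmat K)) 1 (r n m)"
  by (simp add: Va_def sform_def mv_def sqmat_inv_def)

lemma Va_transposed_eq_sform:
  "rowcol c (matrix_inv (mat a + K) *v (matrix_inv (mat 1 + M n m) *v r n m))
    = sform c (sqmat_inv (1 + Abs_sqmat (M n m))) 1 (sqmat_inv (scal a + Abs_sqmat K)) (r n m)"
  by (simp add: sform_def mv_def sqmat_inv_def)

lemma Sij_sym_imp_sform_poly_sqmat_sym: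
  assumes "\<And>i j. Sij c K M r n m i j = Sij c K M r n m j i"
  shows "sform c (sqmat_inv (1 + Abs_sqmat (M n m))) (poly_sqmat f (Abs_sqmat K)) (poly_sqmat g (Abs_sqmat K)) (r n m)
    = sform c (sqmat_inv (1 + Abs_sqmat (M n m))) (poly_sqmat g (Abs_sqmat K)) (poly_sqmat f (Abs_sqmat K)) (r n m)"
  using assms[of "int i" "int j" for i j] by (intro sform_poly_sqmat_sym) (simp add: Sij_eq_sform)

lemma Sab_symmetric:
  assumes sym: "\<And>i j. Sij c K M r n m i j = Sij c K M r n m j i"
    and "invertible (mat a + K)" "invertible (mat b + K)"
  shows "Sab c K M r n m a b = Sab c K M r n m b a"
proof -
  obtain f g where "sqmat_inv (scal a + Abs_sqmat K) = poly_sqmat f (Abs_sqmat K)"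
    "sqmat_inv (scal b + Abs_sqmat K) = poly_sqmat g (Abs_sqmat K)"
    using sqmat_inv_is_poly_sqmat assms(2,3) by (metis Rep_sqmat_simps(1,2) Rep_scal)
  then show ?thesis
    using Sij_sym_imp_sform_poly_sqmat_sym[OF sym] by (simp add: Sab_eq_sform)
qed

lemma Va_transposed:
  assumes sym: "\<And>i j. Sij c K M r n m i j = Sij c K M r n m j i"
    and "invertible (mat a + K)"
  shows "Va c K M r n m a = 1 - rowcol c (matrix_inv (mat a + K) *v (matrix_inv (mat 1 + M n m) *v r n m))"
proof -
  obtain f where "sqmat_inv (scal a + Abs_sqmat K) = poly_sqmat f (Abs_sqmat K)"
    using sqmat_inv_is_poly_sqmat assms(2) by (metis Rep_sqmat_simps(1,2) Rep_scal)
  then show ?thesis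
    using Sij_sym_imp_sform_poly_sqmat_sym[OF sym, of f 1]
    by (simp add: Va_eq_sform Va_transposed_eq_sform)
qed

locale lattice_step =
  fixes K :: "complex^'n::finite^'n" and c :: "complex^'n"
    and r :: "int \<Rightarrow> int \<Rightarrow> complex^'n" and M :: "int \<Rightarrow> int \<Rightarrow> complex^'n^'n"
    and s :: complex and n m n' m' :: int
  assumes eig: "\<And>k l. is_eigenvalue K k \<Longrightarrow> is_eigenvalue K l \<Longrightarrow> k + l \<noteq> 0"
    and invertible_K: "invertible K"
    and shift: "(mat s - K) *v r n' m' = (mat s + K) *v r n m"
    and M_eq: "M n m ** K + K ** M n m = outer (r n m) c"
    and M_eq': "M n' m' ** K + K ** M n' m' = outer (r n' m') c"
    and M_inv: "invertible (mat 1 + M n m)"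
    and M_inv': "invertible (mat 1 + M n' m')"
begin

lemma eig_sqmat:
  "is_eigenvalue (Rep_sqmat (Abs_sqmat K)) k \<Longrightarrow> is_eigenvalue (Rep_sqmat (Abs_sqmat K)) l \<Longrightarrow> k + l \<noteq> 0"
  using eig by simp

lemma invertible_K_sqmat: "invertible (Rep_sqmat (Abs_sqmat K))"
  using invertible_K by simp

lemma shift_sqmat: "mv (scal s - Abs_sqmat K) (r n' m') = mv (scal s + Abs_sqmat K) (r n m)"
  using shift by (simp add: mv_def)

lemma M_eq_sqmat:
  "Abs_sqmat (M n m) * Abs_sqmat K + Abs_sqmat K * Abs_sqmat (M n m) = dyad (r n m) c"
  "Abs_sqmat (M n' m') * Abs_sqmat K + Abs_sqmat K * Abs_sqmat (M n' m') = dyad (r n' m') c"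
  using M_eq M_eq' by (simp_all add: sqmat_eq_iff dyad_def)

lemma M_inv_sqmat:
  "invertible (Rep_sqmat (1 + Abs_sqmat (M n m)))"
  "invertible (Rep_sqmat (1 + Abs_sqmat (M n' m')))"
  using M_inv M_inv' by simp_all

lemmas resolvent_relations = resolvent_shift_relations[OF eig_sqmat shift_sqmat M_eq_sqmat M_inv_sqmat]

lemma Sij_relations:
  "s * Sij c K M r n' m' i j - Sij c K M r n' m' i (j + 1)
    = s * Sij c K M r n m i j + Sij c K M r n m (i + 1) j
      - Sij c K M r n' m' i 0 * Sij c K M r n m 0 j"
  "s * Sij c K M r n m i j + Sij c K M r n m i (j + 1)
    = s * Sij c K M r n' m' i j - Sij c K M r n' m' (i + 1) j
      + Sij c K M r n m i 0 * Sij c K M r n' m' 0 j"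
  unfolding Sij_eq_sform ipow_add_1[OF invertible_K_sqmat] ipow_0
  using sform_shift_identities[OF resolvent_relations shift_sqmat ipow_commute[OF invertible_K_sqmat]]
  by simp_all

lemma Sab_Va_relations:
  assumes inv_a: "invertible (mat a + K)" and inv_b: "invertible (mat b + K)"
    and sym: "\<And>i j. Sij c K M r n m i j = Sij c K M r n m j i"
    and sym': "\<And>i j. Sij c K M r n' m' i j = Sij c K M r n' m' j i"
  shows "1 - (s + b) * Sab c K M r n' m' a b + (s - a) * Sab c K M r n m a b
      = Va c K M r n' m' a * Va c K M r n m b"
    and "1 - (s + a) * Sab c K M r n' m' a b + (s - b) * Sab c K M r n m a b
      = Va c K M r n' m' b * Va c K M r n m a"
proof -
  have rel: "1 - (s + y) * Sab c K M r n' m' x y + (s - x) * Sab c K M r n m x y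
      = Va c K M r n' m' x * Va c K M r n m y"
    if inv_x: "invertible (mat x + K)" and inv_y: "invertible (mat y + K)" for x y
    using sform_resolvent_identity[OF resolvent_relations(2) shift_sqmat, of x y]
      Sab_symmetric[OF sym inv_x inv_y] Sab_symmetric[OF sym' inv_x inv_y] Va_transposed[OF sym' inv_x]
      inv_x inv_y
    by (simp add: Sab_eq_sform Va_eq_sform Va_transposed_eq_sform)
  show "1 - (s + b) * Sab c K M r n' m' a b + (s - a) * Sab c K M r n m a b
      = Va c K M r n' m' a * Va c K M r n m b"
    by (rule rel[OF inv_a inv_b])
  show "1 - (s + a) * Sab c K M r n' m' a b + (s - b) * Sab c K M r n m a b
      = Va c K M r n' m' b * Va c K M r n m a"
    using rel[OF inv_b inv_a] Sab_symmetric[OF sym inv_a inv_b] Sab_symmetric[OF sym' inv_a inv_b]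
    by simp
qed

end

theorem theorem1:
  fixes p q a b :: complex
    and K :: "complex^'n^'n"
    and c :: "complex^'n"
    and r :: "int \<Rightarrow> int \<Rightarrow> complex^'n"
    and M :: "int \<Rightarrow> int \<Rightarrow> complex^'n^'n"
  assumes r_n: "\<And>n m. (mat p - K) *v r (n + 1) m = (mat p + K) *v r n m"
    and r_m: "\<And>n m. (mat q - K) *v r n (m + 1) = (mat q + K) *v r n m"
    and M_eq: "\<And>n m. M n m ** K + K ** M n m = outer (r n m) c"
    and M_inv: "\<And>n m. invertible (mat 1 + M n m)"
    and s_inv: "\<And>s. s \<in> {0, p, q, a, b} \<Longrightarrow> invertible (mat s + K) \<and> invertible (mat s - K)"
    and eig: "\<And>k l. is_eigenvalue K k \<Longrightarrow> is_eigenvalue K l \<Longrightarrow> k + l \<noteq> 0"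
  shows
   "(\<forall>n m i j.
      p * Sij c K M r (n + 1) m i j - Sij c K M r (n + 1) m i (j + 1)
        = p * Sij c K M r n m i j + Sij c K M r n m (i + 1) j
          - Sij c K M r (n + 1) m i 0 * Sij c K M r n m 0 j
    \<and> p * Sij c K M r n m i j + Sij c K M r n m i (j + 1)
        = p * Sij c K M r (n + 1) m i j - Sij c K M r (n + 1) m (i + 1) j
          + Sij c K M r n m i 0 * Sij c K M r (n + 1) m 0 j
    \<and> q * Sij c K M r n (m + 1) i j - Sij c K M r n (m + 1) i (j + 1)
        = q * Sij c K M r n m i j + Sij c K M r n m (i + 1) j
          - Sij c K M r n (m + 1) i 0 * Sij c K M r n m 0 j
    \<and> q * Sij c K M r n m i j + Sij c K M r n m i (j + 1)
        = q * Sij c K M r n (m + 1) i j - Sij c K M r n (m + 1) (i + 1) j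
          + Sij c K M r n m i 0 * Sij c K M r n (m + 1) 0 j)
    \<and> ((\<forall>n m i j. Sij c K M r n m i j = Sij c K M r n m j i) \<longrightarrow>
       (\<forall>n m.
          Sab c K M r n m a b = Sab c K M r n m b a
        \<and> Va c K M r n m a
            = 1 - rowcol c (matrix_inv (mat a + K) *v (matrix_inv (mat 1 + M n m) *v r n m))
        \<and> 1 - (p + b) * Sab c K M r (n + 1) m a b + (p - a) * Sab c K M r n m a b
            = Va c K M r (n + 1) m a * Va c K M r n m b
        \<and> 1 - (q + b) * Sab c K M r n (m + 1) a b + (q - a) * Sab c K M r n m a b
            = Va c K M r n (m + 1) a * Va c K M r n m b
        \<and> 1 - (p + a) * Sab c K M r (n + 1) m a b + (p - b) * Sab c K M r n m a b
            = Va c K M r (n + 1) m b * Va c K M r n m a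
        \<and> 1 - (q + a) * Sab c K M r n (m + 1) a b + (q - b) * Sab c K M r n m a b
            = Va c K M r n (m + 1) b * Va c K M r n m a))"
proof -
  have inv_K: "invertible K"
    using s_inv[of 0] by simp
  have step_n: "lattice_step K c r M p n m (n + 1) m" for n m
    by (simp add: lattice_step_def eig inv_K r_n M_eq M_inv)
  have step_m: "lattice_step K c r M q n m n (m + 1)" for n m
    by (simp add: lattice_step_def eig inv_K r_m M_eq M_inv)
  have inv_ab: "invertible (mat a + K)" "invertible (mat b + K)"
    using s_inv by auto
  show ?thesis
    by (intro conjI allI impI)
      (rule lattice_step.Sij_relations[OF step_n] lattice_step.Sij_relations[OF step_m]
        Sab_symmetric[OF _ inv_ab] Va_transposed[OF _ inv_ab(1)]
        lattice_step.Sab_Va_relations[OF step_n inv_ab] lattice_step.Sab_Va_relations[OF step_m inv_ab];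
        blast)+
qed

end
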